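(* Consider markets with scalar single-parameter valuations: $n$ agents, an unlimited supply of a good (at most one copy per agent), agent $i$ has private type $t_i\in[0,\infty)$ and valuation $v_i(t_i,S)=t_i\,w_i(S)$ for winning sets $S\subseteq[n]$, with publicly known $w_i:2^{[n]}\to\mathbb{R}_{\ge0}$, $w_i(S)=0$ for $i\notin S$, and such that each $v_i(t_i,\cdot)$ is monotone ($v_i(t_i,S)\le v_i(t_i,R)$ for $S\subseteq R$) and subadditive ($v_i(t_i,S\cup R)\le v_i(t_i,S)+v_i(t_i,R)$ whenever $i\in S\cap R$). Then there is no universally truthful mechanism achieving a constant approximation ratio with respect to $\mathcal{F}^{(2)}$: for every constant $\alpha\ge1$ there exist $n$ and such public functions $w_1,\dots,w_n$ such that no universally truthful mechanism $\mathcal{M}$ satisfies $\mathbb{E}[\mathrm{Rev}_{\mathcal{M}}(t)]\ge \mathcal{F}^{(2)}(t)/\alpha$ for all $t\in[0,\infty)^n$.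
   Context: A deterministic mechanism maps the reported type vector $t$ to a winning set $S$ and prices $p_i$ for $i\in S$ (agents outside $S$ pay $0$); agent $i$'s utility is $v_i(t_i,S)-p_i$ if $i\in S$ and $0$ otherwise, and $\mathrm{Rev}$ is $\sum_{i\in S}p_i$. It is truthful if for every $i$ and every fixed reports of the others, reporting the true type maximizes $i$'s utility, and individually rational (voluntary participation) if truthful agents always have nonnegative utility. A universally truthful mechanism is a probability distribution over deterministic truthful, individually rational mechanisms. $\mathcal{F}^{(2)}(t)=\max\{c|S| : c\ge0,\ S\subseteq[n],\ |S|\ge 2,\ v_i(t_i,S)\ge c\ \forall i\in S\}$. *)

theory Defs
  imports "HOL-Probability.Probability"
begin

text \<open>Agents are 0,...,n-1. A type vector is an extensional function on agents.\<close>

type_synonym tvec = "nat \<Rightarrow> real"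

text \<open>A deterministic mechanism: winning-set rule and price rule.\<close>
type_synonym mech = "(tvec \<Rightarrow> nat set) \<times> (tvec \<Rightarrow> nat \<Rightarrow> real)"

definition type_space :: "nat \<Rightarrow> tvec set" where
  "type_space n = {..<n} \<rightarrow>\<^sub>E {0::real..}"

definition val :: "(nat \<Rightarrow> nat set \<Rightarrow> real) \<Rightarrow> nat \<Rightarrow> real \<Rightarrow> nat set \<Rightarrow> real" where
  "val w i x S = x * w i S"

definition valid_weights :: "nat \<Rightarrow> (nat \<Rightarrow> nat set \<Rightarrow> real) \<Rightarrow> bool" where
  "valid_weights n w \<longleftrightarrow>
     (\<forall>i<n. \<forall>S. S \<subseteq> {..<n} \<longrightarrow> w i S \<ge> 0) \<and>
     (\<forall>i<n. \<forall>S. S \<subseteq> {..<n} \<longrightarrow> i \<notin> S \<longrightarrow> w i S = 0) \<and>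
     (\<forall>i<n. \<forall>x\<ge>0. \<forall>S R. S \<subseteq> R \<longrightarrow> R \<subseteq> {..<n} \<longrightarrow> val w i x S \<le> val w i x R) \<and>
     (\<forall>i<n. \<forall>x\<ge>0. \<forall>S R. S \<subseteq> {..<n} \<longrightarrow> R \<subseteq> {..<n} \<longrightarrow> i \<in> S \<inter> R \<longrightarrow>
         val w i x (S \<union> R) \<le> val w i x S + val w i x R)"

text \<open>Utility of agent i with true type x when the reported vector is t.\<close>
definition utility :: "(nat \<Rightarrow> nat set \<Rightarrow> real) \<Rightarrow> mech \<Rightarrow> nat \<Rightarrow> real \<Rightarrow> tvec \<Rightarrow> real" where
  "utility w m i x t = (if i \<in> fst m t then val w i x (fst m t) - snd m t i else 0)"

definition revenue :: "mech \<Rightarrow> tvec \<Rightarrow> real" where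
  "revenue m t = (\<Sum>i\<in>fst m t. snd m t i)"

definition truthful_IR :: "nat \<Rightarrow> (nat \<Rightarrow> nat set \<Rightarrow> real) \<Rightarrow> mech \<Rightarrow> bool" where
  "truthful_IR n w m \<longleftrightarrow>
     (\<forall>t\<in>type_space n. fst m t \<subseteq> {..<n}) \<and>
     (\<forall>t\<in>type_space n. \<forall>i<n. \<forall>x\<ge>0.
         utility w m i (t i) (t(i := x)) \<le> utility w m i (t i) t) \<and>
     (\<forall>t\<in>type_space n. \<forall>i<n. 0 \<le> utility w m i (t i) t)"

text \<open>A universally truthful mechanism: a probability distribution over deterministic
  truthful, individually rational mechanisms (revenue measurable so its expectation makes sense).\<close>
definition universally_truthful :: "nat \<Rightarrow> (nat \<Rightarrow> nat set \<Rightarrow> real) \<Rightarrow> mech measure \<Rightarrow> bool" where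
  "universally_truthful n w M \<longleftrightarrow>
     prob_space M \<and> (\<forall>m\<in>space M. truthful_IR n w m) \<and>
     (\<forall>t\<in>type_space n. (\<lambda>m. revenue m t) \<in> borel_measurable M)"

definition F2 :: "nat \<Rightarrow> (nat \<Rightarrow> nat set \<Rightarrow> real) \<Rightarrow> tvec \<Rightarrow> real" where
  "F2 n w t = Sup {c * real (card S) | c S. c \<ge> 0 \<and> S \<subseteq> {..<n} \<and> card S \<ge> 2 \<and>
                      (\<forall>i\<in>S. val w i (t i) S \<ge> c)}"

end

theory Submission
  imports Defs
begin

text \<open>Take two agents who each value only the outcome in which both win, with weight \<open>1\<close>.
  A truthful mechanism then sells the pair or nothing, and by the usual monotonicity argument,
  once it sells at a diagonal report \<open>(s', s')\<close> it sells at every \<open>(s, s)\<close> with \<open>s \<ge> s'\<close>,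
  charging each agent at most \<open>s'\<close>. Hence along \<open>s\<^sub>k = (2\<alpha>)\<^sup>-\<^sup>k\<close> the normalised revenues
  \<open>Rev(s\<^sub>k, s\<^sub>k) / s\<^sub>k\<close> of a deterministic truthful mechanism are at most \<open>1/\<alpha>\<close>, except at the
  last index where the pair is sold, where they are at most \<open>2\<close>. Since
  \<open>F\<^sup>(\<^sup>2\<^sup>)(s\<^sub>k, s\<^sub>k) = 2 s\<^sub>k\<close>, an \<open>\<alpha>\<close>-approximation would make the expected sum of the first \<open>K\<close>
  terms at least \<open>2K/\<alpha>\<close>, which exceeds \<open>K/\<alpha> + 2\<close> once \<open>K > 2\<alpha>\<close>.\<close>

definition pair_weights :: "nat \<Rightarrow> nat set \<Rightarrow> real" where
  "pair_weights i S = of_bool (S = {0, 1})"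

definition pair_types :: "real \<Rightarrow> real \<Rightarrow> tvec" where
  "pair_types a b = (\<lambda>i. if i = 0 then a else if i = 1 then b else undefined)"

lemma lessThan_two: "{..<2::nat} = {0, 1}"
  by auto

lemma valid_pair_weights: "valid_weights 2 pair_weights"
proof -
  have mono: "pair_weights i S \<le> pair_weights i R" if "S \<subseteq> R" "R \<subseteq> {0, 1}" for i S R
    using that by (auto simp: pair_weights_def)
  have subadd: "pair_weights i (S \<union> R) \<le> pair_weights i S + pair_weights i R"
    if "S \<subseteq> {0, 1}" "R \<subseteq> {0, 1}" "i \<in> S \<inter> R" for i S R
  proof (cases "S = {0, 1} \<or> R = {0, 1}")
    case False
    with that have "S = {i}" "R = {i}" by auto
    then show ?thesis by (simp add: pair_weights_def)
  qed (auto simp: pair_weights_def)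
  show ?thesis
    unfolding valid_weights_def val_def lessThan_two
    using mono subadd by (auto simp: pair_weights_def intro: mult_left_mono)
qed

lemma type_space_upd:
  assumes "t \<in> type_space n" "i < n" "0 \<le> x"
  shows "t(i := x) \<in> type_space n"
  using assms unfolding type_space_def by (intro PiE_I) (auto dest: PiE_mem PiE_arb)

lemma pair_types_in_type_space: "0 \<le> a \<Longrightarrow> 0 \<le> b \<Longrightarrow> pair_types a b \<in> type_space 2"
  unfolding type_space_def pair_types_def PiE_def extensional_def by auto

lemma pair_types_apply [simp]: "pair_types a b 0 = a" "pair_types a b (Suc 0) = b"
  by (simp_all add: pair_types_def)

lemma pair_types_upd [simp]:
  "(pair_types a b)(0 := x) = pair_types x b" "(pair_types a b)(Suc 0 := x) = pair_types a x"
  by (auto simp: pair_types_def)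

lemma val_pair_weights_le: "0 \<le> x \<Longrightarrow> val pair_weights i x S \<le> x"
  by (simp add: val_def pair_weights_def)

lemma F2_pair_types_diag_ge:
  assumes "0 \<le> s"
  shows "2 * s \<le> F2 2 pair_weights (pair_types s s)"
proof -
  let ?A = "{c * real (card S) | c S. c \<ge> 0 \<and> S \<subseteq> {..<2} \<and> card S \<ge> 2 \<and>
              (\<forall>i\<in>S. val pair_weights i (pair_types s s i) S \<ge> c)}"
  have "2 * s \<in> ?A"
    unfolding lessThan_two using assms
    by (intro CollectI exI[of _ s] exI[of _ "{0, 1}"] conjI) (simp_all add: val_def pair_weights_def)
  moreover have "bdd_above ?A"
  proof (rule bdd_aboveI)
    fix y assume "y \<in> ?A"
    then obtain c S where y: "y = c * real (card S)" "0 \<le> c" "S \<subseteq> {..<2}" "2 \<le> card S"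
      and bid: "\<forall>i\<in>S. c \<le> val pair_weights i (pair_types s s i) S"
      by blast
    have S: "S \<subseteq> {0, 1}"
      using y(3) by (simp add: lessThan_two)
    obtain i where "i \<in> S"
      using y(4) by fastforce
    with S have "pair_types s s i = s"
      by (auto simp: pair_types_def)
    with bid \<open>i \<in> S\<close> have "c \<le> s"
      using val_pair_weights_le[OF assms] by (metis order_trans)
    moreover have "card S \<le> 2"
      using card_mono[OF _ S] by simp
    ultimately have "c * real (card S) \<le> s * 2"
      using y(2) by (intro mult_mono) simp_all
    then show "y \<le> 2 * s"
      using y(1) by simp
  qed
  ultimately show ?thesis
    unfolding F2_def by (rule cSup_upper)
qed

locale truthful_pair_mechanism =
  fixes m :: mech
  assumes truthful: "truthful_IR 2 pair_weights m"
begin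

definition sold :: "tvec \<Rightarrow> bool" where
  "sold t \<longleftrightarrow> fst m t = {0, 1}"

definition price :: "nat \<Rightarrow> tvec \<Rightarrow> real" where
  "price i t = (if i \<in> fst m t then snd m t i else 0)"

lemma utility_eq:
  assumes "i < 2"
  shows "utility pair_weights m i x t = x * of_bool (sold t) - price i t"
proof (cases "i \<in> fst m t")
  case False
  have "i \<in> {0, 1}"
    using assms by auto
  with False have "\<not> sold t"
    unfolding sold_def by blast
  with False show ?thesis
    by (simp add: utility_def price_def)
qed (simp add: utility_def val_def pair_weights_def sold_def price_def)

lemma revenue_eq:
  assumes "t \<in> type_space 2"
  shows "revenue m t = price 0 t + price 1 t"
proof -
  have "fst m t \<subseteq> {0, 1}"
    using truthful assms unfolding truthful_IR_def lessThan_two by blast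
  then have "{0, 1} \<inter> fst m t = fst m t"
    by blast
  moreover have "(\<Sum>i\<in>{0, 1::nat}. price i t) = sum (snd m t) ({0, 1} \<inter> fst m t)"
    unfolding price_def by (simp add: sum.inter_restrict)
  ultimately show ?thesis
    by (simp add: revenue_def)
qed

lemma price_le:
  assumes "t \<in> type_space 2" "i < 2"
  shows "price i t \<le> t i * of_bool (sold t)"
proof -
  have "0 \<le> utility pair_weights m i (t i) t"
    using truthful assms unfolding truthful_IR_def by blast
  then show ?thesis
    using assms(2) by (simp add: utility_eq)
qed

lemma no_profitable_deviation:
  assumes "t \<in> type_space 2" "i < 2" "0 \<le> x"
  shows "t i * of_bool (sold (t(i := x))) - price i (t(i := x)) \<le> t i * of_bool (sold t) - price i t"
proof -
  have "utility pair_weights m i (t i) (t(i := x)) \<le> utility pair_weights m i (t i) t"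
    using truthful assms unfolding truthful_IR_def by blast
  then show ?thesis
    using assms(2) by (simp add: utility_eq)
qed

lemma sold_raise:
  assumes t: "t \<in> type_space 2" and i: "i < 2" and "sold t" "t i \<le> x"
  shows "sold (t(i := x)) \<and> price i (t(i := x)) = price i t"
proof -
  let ?t' = "t(i := x)"
  have "0 \<le> t i"
    using PiE_mem[OF t[unfolded type_space_def], of i] i by simp
  then have t': "?t' \<in> type_space 2"
    using type_space_upd[OF t i] \<open>t i \<le> x\<close> by simp
  have up: "t i * of_bool (sold ?t') - price i ?t' \<le> t i - price i t"
    using no_profitable_deviation[OF t i, of x] \<open>sold t\<close> \<open>0 \<le> t i\<close> \<open>t i \<le> x\<close> by simp
  have down: "x - price i t \<le> x * of_bool (sold ?t') - price i ?t'"
    using no_profitable_deviation[OF t' i \<open>0 \<le> t i\<close>] \<open>sold t\<close> by simp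
  show ?thesis
  proof (cases "sold ?t'")
    case False
    with up down have "x = t i"
      using \<open>t i \<le> x\<close> by simp
    then have "?t' = t" by simp
    with False \<open>sold t\<close> show ?thesis by simp
  qed (use up down in simp)
qed

lemma revenue_diag_le:
  "0 \<le> s \<Longrightarrow> revenue m (pair_types s s) \<le> 2 * s * of_bool (sold (pair_types s s))"
  using price_le[of "pair_types s s" 0] price_le[of "pair_types s s" 1]
  by (simp add: revenue_eq pair_types_in_type_space)

text \<open>If the pair is sold at the diagonal report \<open>(s', s')\<close>, raising first one report and then
  the other to \<open>s \<ge> s'\<close> keeps it sold, and each agent's price at \<open>(s, s)\<close> is the one she pays
  at a report where the other agent bids \<open>s'\<close>, hence at most \<open>s'\<close>.\<close>

lemma sold_diag_raise:
  assumes "sold (pair_types s' s')" "0 \<le> s'" "s' \<le> s"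
  shows "sold (pair_types s s) \<and> revenue m (pair_types s s) \<le> 2 * s'"
proof -
  have ts: "pair_types a b \<in> type_space 2" if "s' \<le> a" "s' \<le> b" for a b
    using that assms(2) by (simp add: pair_types_in_type_space)
  have a: "sold (pair_types s s')" "sold (pair_types s s)"
    "price 1 (pair_types s s) = price 1 (pair_types s s')"
    using sold_raise[of "pair_types s' s'" 0 s] sold_raise[of "pair_types s s'" 1 s] assms ts
    by auto
  have b: "sold (pair_types s' s)" "price 0 (pair_types s s) = price 0 (pair_types s' s)"
    using sold_raise[of "pair_types s' s'" 1 s] sold_raise[of "pair_types s' s" 0 s] assms ts
    by auto
  have "price 1 (pair_types s s') \<le> s'" "price 0 (pair_types s' s) \<le> s'"
    using price_le[of "pair_types s s'" 1] price_le[of "pair_types s' s" 0] a(1) b(1) ts assms(3)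
    by auto
  with a b show ?thesis
    using assms ts by (simp add: revenue_eq)
qed

lemma revenue_ratio_sum_le:
  assumes pos: "\<And>k. 0 < s k" and decr: "\<And>k. s (Suc k) \<le> s k"
  shows "(\<Sum>k<K. revenue m (pair_types (s k) (s k)) / s k) \<le> 2 * (\<Sum>k<K. s (Suc k) / s k) + 2"
proof -
  define h where "h k = revenue m (pair_types (s k) (s k)) / s k" for k
  define sold_at where "sold_at k = sold (pair_types (s k) (s k))" for k
  txt \<open>The correction term pays for the single index where the pair is sold at \<open>s k\<close>
    but no longer at \<open>s (Suc k)\<close>.\<close>
  have "(\<Sum>k<K. h k) \<le> 2 * (\<Sum>k<K. s (Suc k) / s k) + 2 - 2 * of_bool (sold_at K)"
  proof (induction K)
    case (Suc K)
    have "h K \<le> 2 * s (Suc K) / s K + 2 * of_bool (sold_at K) - 2 * of_bool (sold_at (Suc K))"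
    proof (cases "sold_at (Suc K)")
      case True
      with sold_diag_raise[of "s (Suc K)" "s K"] pos decr
      have "sold_at K" "revenue m (pair_types (s K) (s K)) \<le> 2 * s (Suc K)"
        by (auto simp: sold_at_def less_imp_le)
      then show ?thesis
        using True pos[of K] by (simp add: h_def divide_right_mono)
    next
      case False
      have "h K \<le> 2 * s K * of_bool (sold_at K) / s K"
        unfolding h_def sold_at_def using pos[of K] by (intro divide_right_mono revenue_diag_le) auto
      then have "h K \<le> 2 * of_bool (sold_at K)"
        using pos[of K] by simp
      moreover have "0 \<le> 2 * s (Suc K) / s K"
        using pos[of K] pos[of "Suc K"] by simp
      ultimately show ?thesis
        using False by simp
    qed
    with Suc.IH show ?case by simp
  qed simp
  then show ?thesis
    unfolding h_def by (cases "sold_at K") simp_all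
qed

end

lemma expected_revenue_ratio_sum_le:
  assumes M: "universally_truthful 2 pair_weights M"
    and pos: "\<And>k. 0 < s k" and decr: "\<And>k. s (Suc k) \<le> s k"
    and integrable: "\<And>k. integrable M (\<lambda>m. revenue m (pair_types (s k) (s k)))"
  shows "(\<Sum>k<K. (\<integral>m. revenue m (pair_types (s k) (s k)) \<partial>M) / s k)
           \<le> 2 * (\<Sum>k<K. s (Suc k) / s k) + 2"
proof -
  interpret prob_space M
    using M by (simp add: universally_truthful_def)
  have "(\<Sum>k<K. (\<integral>m. revenue m (pair_types (s k) (s k)) \<partial>M) / s k)
      = (\<integral>m. (\<Sum>k<K. revenue m (pair_types (s k) (s k)) / s k) \<partial>M)"
    by (simp add: integrable Bochner_Integration.integral_sum)
  also have "\<dots> \<le> 2 * (\<Sum>k<K. s (Suc k) / s k) + 2"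
  proof (rule integral_le_const)
    show "AE m in M. (\<Sum>k<K. revenue m (pair_types (s k) (s k)) / s k)
                       \<le> 2 * (\<Sum>k<K. s (Suc k) / s k) + 2"
    proof (rule AE_I2)
      fix m assume "m \<in> space M"
      then interpret truthful_pair_mechanism m
        using M by unfold_locales (simp add: universally_truthful_def)
      show "(\<Sum>k<K. revenue m (pair_types (s k) (s k)) / s k) \<le> 2 * (\<Sum>k<K. s (Suc k) / s k) + 2"
        using pos decr by (rule revenue_ratio_sum_le)
    qed
  qed (simp add: integrable)
  finally show ?thesis .
qed

lemma no_approximating_pair_mechanism:
  assumes "1 \<le> \<alpha>" and M: "universally_truthful 2 pair_weights M"
  shows "\<exists>t\<in>type_space 2. (\<integral>m. revenue m t \<partial>M) < F2 2 pair_weights t / \<alpha>"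
proof (rule ccontr)
  assume "\<not> ?thesis"
  then have approx: "\<forall>t\<in>type_space 2. F2 2 pair_weights t / \<alpha> \<le> (\<integral>m. revenue m t \<partial>M)"
    by (simp add: not_less)
  define s where "s k = 1 / (2 * \<alpha>) ^ k" for k :: nat
  define E where "E k = (\<integral>m. revenue m (pair_types (s k) (s k)) \<partial>M)" for k
  define K where "K = nat \<lceil>2 * \<alpha>\<rceil> + 1"
  have s_pos: "0 < s k" for k
    using assms(1) by (simp add: s_def)
  have s_Suc: "s (Suc k) = s k / (2 * \<alpha>)" for k
    by (simp add: s_def)
  have s_ratio: "s (Suc k) / s k = 1 / (2 * \<alpha>)" for k
    using s_pos[of k] by (simp add: s_Suc)
  have s_decr: "s (Suc k) \<le> s k" for k
    using s_pos[of k] assms(1) by (simp add: s_Suc divide_le_eq)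
  have E_lower: "2 / \<alpha> \<le> E k / s k" for k
  proof -
    have "2 * s k / \<alpha> \<le> F2 2 pair_weights (pair_types (s k) (s k)) / \<alpha>"
      using F2_pair_types_diag_ge[of "s k"] s_pos[of k] assms(1) by (simp add: divide_right_mono)
    also have "\<dots> \<le> E k"
      using approx s_pos[of k] by (simp add: E_def pair_types_in_type_space less_imp_le)
    finally show ?thesis
      using s_pos[of k] by (simp add: pos_le_divide_eq)
  qed
  have integrable: "integrable M (\<lambda>m. revenue m (pair_types (s k) (s k)))" for k
  proof (rule ccontr)
    assume "\<not> ?thesis"
    then have "E k = 0"
      unfolding E_def by (rule not_integrable_integral_eq)
    with E_lower[of k] assms(1) show False
      by simp
  qed
  have "2 * (real K / \<alpha>) = (\<Sum>k<K. 2 / \<alpha>)"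
    by simp
  also have "\<dots> \<le> (\<Sum>k<K. E k / s k)"
    by (intro sum_mono E_lower)
  also have "\<dots> \<le> 2 * (\<Sum>k<K. s (Suc k) / s k) + 2"
    unfolding E_def using M s_pos s_decr integrable by (rule expected_revenue_ratio_sum_le)
  also have "\<dots> = real K / \<alpha> + 2"
    by (simp add: s_ratio)
  finally have "real K / \<alpha> \<le> 2"
    by linarith
  then have "real K \<le> 2 * \<alpha>"
    using assms(1) by (simp add: divide_le_eq)
  then show False
    unfolding K_def by linarith
qed

theorem theorem3:
  fixes \<alpha> :: real
  assumes "\<alpha> \<ge> 1"
  shows "\<exists>n w. valid_weights n w \<and>
           \<not> (\<exists>M. universally_truthful n w M \<and>
                 (\<forall>t\<in>type_space n. (\<integral>m. revenue m t \<partial>M) \<ge> F2 n w t / \<alpha>))"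
proof (intro exI conjI)
  show "valid_weights 2 pair_weights"
    by (rule valid_pair_weights)
  show "\<not> (\<exists>M. universally_truthful 2 pair_weights M \<and>
              (\<forall>t\<in>type_space 2. (\<integral>m. revenue m t \<partial>M) \<ge> F2 2 pair_weights t / \<alpha>))"
    using no_approximating_pair_mechanism[OF assms] by (meson not_less)
qed

end
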